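(* Let $X$ be a Dedekind complete Riesz space with weak order unit $e$ and let $x\in X^{s}_{+}$. Then $\bigwedge_{k=1}^{\infty}P_{(x-ke)^{+}}e=P_{x^{\infty}}e$.
   Context: For a Dedekind complete Riesz space $X$, its sup-completion $X^{s}$ is defined as follows: let $\mathcal{A}$ be the set of all nonempty upward directed subsets of $X$, with $A\sim B$ iff $\sup_{a\in A}(x\wedge a)=\sup_{b\in B}(x\wedge b)$ for all $x\in X$; $X^{s}=\mathcal{A}/\sim$ with the naturally induced addition, nonnegative scalar multiplication and order, $X$ being identified with a subset of $X^{s}$. $X^{s}$ is a lattice-ordered cone in which every nonempty subset has a supremum and every element is the supremum of the elements of $X$ below it; $X^{s}_{+}=\{x\ge 0\}$; $X^{u}$ is the universal completion of $X$ and $X^{u}_{+}\subseteq X^{s}$. For a band $B$ of $X$, $\infty_B$ is the supremum of $B$ in $X^{s}$. Every $x\in X^{s}_{+}$ can be written uniquely as $x=\infty_{B}+u$ with $B$ a band of $X$ and $u\in X^{u}$, $u\perp B$; one calls $x^{\infty}=\infty_B$ the infinite part and $x^{f}=u$ the finite part of $x$, and $P_{x^{\infty}}$ denotes the band projection onto $B$. For $z\in X^{s}_{+}$, $P_{z}$ denotes the band projection onto the band generated by $z$ (i.e. by the elements of $X^u_+$ below $z$). For $x\in X^s$, $(x-ke)^{+}=(x-ke)\vee 0$. *)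

theory Defs
  imports Complex_Main
begin

text \<open>A Dedekind complete Riesz space is modelled by a type of sort
  ordered_real_vector + conditionally_complete_lattice.\<close>

definition rabs :: "'a::{ordered_real_vector, lattice} \<Rightarrow> 'a" where
  "rabs x = sup x (- x)"

definition rdisj :: "'a::{ordered_real_vector, lattice} \<Rightarrow> 'a \<Rightarrow> bool" where
  "rdisj x y \<longleftrightarrow> inf (rabs x) (rabs y) = 0"

definition dcompl :: "'a::{ordered_real_vector, lattice} set \<Rightarrow> 'a set" where
  "dcompl S = {y. \<forall>x\<in>S. rdisj x y}"

definition riesz_ideal :: "'a::{ordered_real_vector, lattice} set \<Rightarrow> bool" where
  "riesz_ideal S \<longleftrightarrow> 0 \<in> S \<and> (\<forall>x\<in>S. \<forall>y\<in>S. x + y \<in> S)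
     \<and> (\<forall>c::real. \<forall>x\<in>S. c *\<^sub>R x \<in> S)
     \<and> (\<forall>x\<in>S. \<forall>y. rabs y \<le> rabs x \<longrightarrow> y \<in> S)"

text \<open>A band: an order closed ideal (closed under all suprema that exist in X;
  in a Dedekind complete space these are the suprema of nonempty bounded above sets).\<close>
definition band :: "'a::{ordered_real_vector, conditionally_complete_lattice} set \<Rightarrow> bool" where
  "band S \<longleftrightarrow> riesz_ideal S \<and> (\<forall>D. D \<subseteq> S \<and> D \<noteq> {} \<and> bdd_above D \<longrightarrow> Sup D \<in> S)"

definition band_gen :: "'a::{ordered_real_vector, conditionally_complete_lattice} set \<Rightarrow> 'a set" where
  "band_gen S = \<Inter> {B. band B \<and> S \<subseteq> B}"

definition band_proj :: "'a::{ordered_real_vector, conditionally_complete_lattice} set \<Rightarrow> 'a \<Rightarrow> 'a" where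
  "band_proj B y = (THE y1. y1 \<in> B \<and> y - y1 \<in> dcompl B)"

definition weak_unit :: "'a::{ordered_real_vector, conditionally_complete_lattice} \<Rightarrow> bool" where
  "weak_unit e \<longleftrightarrow> 0 \<le> e \<and> band_gen {e} = UNIV"

section \<open>Sup-completion, via representatives (nonempty upward directed sets)\<close>

definition up_directed :: "'a::order set \<Rightarrow> bool" where
  "up_directed A \<longleftrightarrow> A \<noteq> {} \<and> (\<forall>a\<in>A. \<forall>b\<in>A. \<exists>c\<in>A. a \<le> c \<and> b \<le> c)"

definition meet_sup :: "'a::conditionally_complete_lattice \<Rightarrow> 'a set \<Rightarrow> 'a" where
  "meet_sup x A = Sup ((\<lambda>a. inf x a) ` A)"

text \<open>Equality (the relation A ~ B) and order of the classes in X^s.\<close>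
definition sc_eq :: "'a::conditionally_complete_lattice set \<Rightarrow> 'a set \<Rightarrow> bool" where
  "sc_eq A B \<longleftrightarrow> (\<forall>x. meet_sup x A = meet_sup x B)"

definition sc_le :: "'a::conditionally_complete_lattice set \<Rightarrow> 'a set \<Rightarrow> bool" where
  "sc_le A B \<longleftrightarrow> (\<forall>x. meet_sup x A \<le> meet_sup x B)"

definition sc_add :: "'a::{ordered_real_vector, lattice} set \<Rightarrow> 'a set \<Rightarrow> 'a set" where
  "sc_add A B = {a + b | a b. a \<in> A \<and> b \<in> B}"

definition sc_pos :: "'a::{ordered_real_vector, conditionally_complete_lattice} set \<Rightarrow> bool" where
  "sc_pos A \<longleftrightarrow> sc_le {0} A"

text \<open>Representative of (x - k e)^+ = (x + (-k e)) sup 0, for x = [A].\<close>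
definition sc_pluspart :: "'a::{ordered_real_vector, lattice} set \<Rightarrow> nat \<Rightarrow> 'a \<Rightarrow> 'a set" where
  "sc_pluspart A k e = (\<lambda>a. sup (a - real k *\<^sub>R e) 0) ` A"

text \<open>Positive elements of X below z = [A]; they generate the band of z.\<close>
definition sc_below :: "'a::{ordered_real_vector, conditionally_complete_lattice} set \<Rightarrow> 'a set" where
  "sc_below A = {y. 0 \<le> y \<and> sc_le {y} A}"

text \<open>Elements of X^u_+ inside X^s_+: those with no infinite part.\<close>
definition sc_finite :: "'a::{ordered_real_vector, conditionally_complete_lattice} set \<Rightarrow> bool" where
  "sc_finite C \<longleftrightarrow> (\<forall>y. 0 < y \<longrightarrow> \<not> (\<forall>n::nat. sc_le {real n *\<^sub>R y} C))"

text \<open>B is the band of the infinite part of x = [A]: x = infty_B + u, u in X^u_+, u disjoint from B.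
  Note infty_B = Sup B in X^s is represented by the directed set B itself.\<close>
definition inf_part_band :: "'a::{ordered_real_vector, conditionally_complete_lattice} set \<Rightarrow> 'a set \<Rightarrow> bool" where
  "inf_part_band A B \<longleftrightarrow> band B \<and>
     (\<exists>C. up_directed C \<and> sc_pos C \<and> sc_finite C
        \<and> (\<forall>b\<in>B. sc_eq ((\<lambda>c. inf c (rabs b)) ` C) {0})
        \<and> sc_eq A (sc_add B C))"

end

theory Submission
  imports Defs "HOL-Library.Lattice_Algebras"
begin

(*
  Write x = \<infinity>_B + u with u finite, and p_k = P_{(x - k e)^+} e.

  For b in B_+ every multiple (m + 1) b lies below x, so ((m + 1) b - k e)^+ belongs to
  the band generated by (x - k e)^+. Dividing by m + 1 and letting m tend to infinity
  shows that b itself belongs to that band; hence P_B e <= p_k for every k.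

  Conversely, k e - x \<and> k e is disjoint from (x - k e)^+, which forces
  k p_k <= x \<and> k e. If z is the infimum of the p_k, the component z' of z disjoint
  from B therefore satisfies n z' <= x, hence n z' <= u, for all n. As u is finite,
  z' = 0, that is z <= P_B e.
*)

section \<open>Lattice-ordered groups and vector lattices\<close>

context lattice_ab_group_add
begin

lemma inf_add_le_add_inf:
  fixes u v w :: 'a
  assumes "0 \<le> u" "0 \<le> v" "0 \<le> w"
  shows "inf u (v + w) \<le> inf u v + inf u w"
proof -
  have "inf u (v + w) = inf (u - w) v + w"
    by (simp add: add_inf_distrib_right)
  also have "\<dots> \<le> inf u v + w"
    using assms by (intro add_right_mono inf_mono) (simp_all add: diff_le_eq)
  finally have "inf u (v + w) \<le> inf (inf u v + w) (inf u v + u)"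
    using assms by (simp add: add_increasing le_infI1)
  also have "\<dots> = inf u v + inf u w"
    by (simp add: add_inf_distrib_left inf_commute)
  finally show ?thesis .
qed

lemma le_of_le_add_disjoint:
  fixes u v w :: 'a
  assumes "0 \<le> u" "0 \<le> v" "0 \<le> w" "u \<le> v + w" "inf u w = 0"
  shows "u \<le> v"
proof -
  have "u = inf u (v + w)" using assms(4) by (rule inf_absorb1[symmetric])
  also have "\<dots> \<le> inf u v + inf u w" using assms(1-3) by (rule inf_add_le_add_inf)
  also have "\<dots> = inf u v" using assms(5) by simp
  finally show ?thesis by simp
qed

lemma inf_pos_part_neg_part:
  "inf (sup u 0) (sup (- u) 0) = 0"
proof -
  have neg: "sup (- u) 0 = - inf u 0"
    using neg_inf_eq_sup[of u 0] by simp
  have "u = sup u 0 + inf u 0"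
    using add_eq_inf_sup[of u 0] by simp
  then have pos: "sup u 0 = u + sup (- u) 0"
    unfolding neg by (metis add_diff_cancel_right' diff_conv_add_uminus)
  have "inf (sup u 0) (sup (- u) 0) = inf (u + sup (- u) 0) (0 + sup (- u) 0)"
    unfolding pos by (simp only: add_0_left)
  also have "\<dots> = inf u 0 + sup (- u) 0"
    by (rule add_inf_distrib_right[symmetric])
  also have "\<dots> = 0"
    unfolding neg by (rule right_minus)
  finally show ?thesis .
qed

end

(* A sort is not a class, so the library on lattice-ordered groups is reached by
   interpretation; rabs is its absolute value. *)
interpretation riesz: lattice_ab_group_add_abs rabs "(+)" "0::'a::{ordered_real_vector, lattice}"
  "(-)" uminus "(\<le>)" "(<)" inf sup
  by unfold_locales (rule rabs_def)

lemma scaleR_sup_nonneg: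
  fixes a b :: "'a::{ordered_real_vector, lattice}"
  assumes "0 \<le> c"
  shows "c *\<^sub>R sup a b = sup (c *\<^sub>R a) (c *\<^sub>R b)"
proof (cases "c = 0")
  case False
  with assms have c: "0 < c" by simp
  have "sup a b \<le> sup (c *\<^sub>R a) (c *\<^sub>R b) /\<^sub>R c"
    using c by (simp add: pos_le_divideR_eq)
  then have "c *\<^sub>R sup a b \<le> sup (c *\<^sub>R a) (c *\<^sub>R b)"
    unfolding pos_le_divideR_eq[OF c] .
  then show ?thesis
    using assms by (intro antisym) (auto intro: scaleR_left_mono)
qed simp

lemma scaleR_inf_nonneg:
  fixes a b :: "'a::{ordered_real_vector, lattice}"
  assumes "0 \<le> c"
  shows "c *\<^sub>R inf a b = inf (c *\<^sub>R a) (c *\<^sub>R b)"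
proof -
  have "c *\<^sub>R inf a b = - (c *\<^sub>R sup (- a) (- b))"
    by (simp only: riesz.inf_eq_neg_sup scaleR_minus_right)
  also have "\<dots> = - sup (- (c *\<^sub>R a)) (- (c *\<^sub>R b))"
    by (simp only: scaleR_sup_nonneg[OF assms] scaleR_minus_right)
  also have "\<dots> = inf (c *\<^sub>R a) (c *\<^sub>R b)"
    by (rule riesz.inf_eq_neg_sup[symmetric])
  finally show ?thesis .
qed

lemma rabs_scaleR: "rabs (c *\<^sub>R x) = \<bar>c\<bar> *\<^sub>R rabs (x::'a::{ordered_real_vector, lattice})"
proof -
  have pos: "rabs (d *\<^sub>R y) = d *\<^sub>R rabs y" if "0 \<le> d" for d and y :: 'a
    unfolding rabs_def using that by (simp only: scaleR_sup_nonneg scaleR_minus_right)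
  show ?thesis
  proof (cases "0 \<le> c")
    case False
    have "rabs (c *\<^sub>R x) = rabs ((- c) *\<^sub>R x)"
      by (simp only: scaleR_minus_left riesz.abs_minus_cancel)
    also have "\<dots> = (- c) *\<^sub>R rabs x"
      using False by (intro pos) simp
    finally show ?thesis using False by simp
  qed (simp add: pos)
qed

lemma inf_scaleR_eq_0:
  fixes u v :: "'a::{ordered_real_vector, lattice}"
  assumes "0 \<le> u" "0 \<le> v" "inf u v = 0" "0 \<le> c"
  shows "inf (c *\<^sub>R u) v = 0"
proof (rule antisym)
  let ?m = "max 1 c"
  have "c *\<^sub>R u \<le> ?m *\<^sub>R u" "v \<le> ?m *\<^sub>R v"
    using assms scaleR_right_mono[of 1 ?m v] by (auto intro: scaleR_right_mono)
  then have "inf (c *\<^sub>R u) v \<le> ?m *\<^sub>R inf u v"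
    by (simp add: scaleR_inf_nonneg le_infI1 le_infI2)
  then show "inf (c *\<^sub>R u) v \<le> 0" using assms(3) by simp
  show "0 \<le> inf (c *\<^sub>R u) v" using assms by (simp add: scaleR_nonneg_nonneg)
qed

section \<open>Order continuity\<close>

lemma inf_cSUP:
  fixes f :: "'b \<Rightarrow> 'a::{ordered_real_vector, conditionally_complete_lattice}"
  assumes ne: "A \<noteq> {}" and bd: "bdd_above (f ` A)"
  shows "inf r (SUP a\<in>A. f a) = (SUP a\<in>A. inf r (f a))"
proof (rule antisym)
  let ?s = "SUP a\<in>A. f a" and ?u = "SUP a\<in>A. inf r (f a)"
  have bdi: "bdd_above ((\<lambda>a. inf r (f a)) ` A)" by (rule bdd_aboveI[of _ r]) auto
  have "f a \<le> ?u + sup r ?s - r" if "a \<in> A" for a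
  proof -
    have "f a = inf r (f a) + sup r (f a) - r"
      using riesz.add_eq_inf_sup[of r "f a"] by (simp add: algebra_simps)
    also have "\<dots> \<le> ?u + sup r ?s - r"
      using that by (intro diff_right_mono add_mono cSUP_upper bdi sup_mono order_refl bd)
    finally show ?thesis .
  qed
  then have le: "?s \<le> ?u + sup r ?s - r" by (intro cSUP_least ne)
  have shift: "x \<le> u + m - r \<Longrightarrow> r + x - m \<le> u" for x u m :: 'a
    by (simp add: algebra_simps)
  have "inf r ?s = r + ?s - sup r ?s"
    using riesz.add_eq_inf_sup[of r ?s] by (metis add_diff_cancel_left')
  also have "\<dots> \<le> ?u" by (rule shift[OF le])
  finally show "inf r ?s \<le> ?u" .
  show "?u \<le> inf r ?s"
    using ne by (intro cSUP_least inf_mono order_refl cSUP_upper bd)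
qed

lemma inf_sup_distrib_riesz:
  fixes x c d :: "'a::{ordered_real_vector, conditionally_complete_lattice}"
  shows "inf x (sup c d) = sup (inf x c) (inf x d)"
  using inf_cSUP[of "{c, d}" id x] by (simp add: cSup_insert)

lemma sup_cSUP:
  fixes f :: "'b \<Rightarrow> 'a::conditionally_complete_lattice"
  assumes "A \<noteq> {}" and "bdd_above (f ` A)"
  shows "sup (SUP a\<in>A. f a) c = (SUP a\<in>A. sup (f a) c)"
proof -
  have "bdd_above ((\<lambda>_. c) ` A)" by (rule bdd_aboveI[of _ c]) auto
  with SUP_sup_distrib[of A f "\<lambda>_. c"] assms show ?thesis by simp
qed

lemma cSUP_diff_const:
  fixes f :: "'b \<Rightarrow> 'a::{ordered_ab_group_add, conditionally_complete_lattice}"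
  assumes ne: "A \<noteq> {}" and bd: "bdd_above (f ` A)"
  shows "(SUP a\<in>A. f a) - t = (SUP a\<in>A. f a - t)"
proof (rule antisym)
  have "bdd_above ((\<lambda>x. x - t) ` f ` A)"
    by (rule bdd_above_image_mono[OF _ bd]) (simp add: mono_def)
  then have "f a - t \<le> (SUP a\<in>A. f a - t)" if "a \<in> A" for a
    using cSUP_upper[OF that, of "\<lambda>a. f a - t"] by (simp add: image_image)
  then have "f a \<le> (SUP a\<in>A. f a - t) + t" if "a \<in> A" for a
    using that by (simp add: diff_le_eq)
  then have "(SUP a\<in>A. f a) \<le> (SUP a\<in>A. f a - t) + t"
    using ne by (intro cSUP_least)
  then show "(SUP a\<in>A. f a) - t \<le> (SUP a\<in>A. f a - t)" by (simp add: diff_le_eq)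
  show "(SUP a\<in>A. f a - t) \<le> (SUP a\<in>A. f a) - t"
    using ne by (intro cSUP_least diff_right_mono cSUP_upper bd)
qed

lemma multiples_bounded_imp_eq_0:
  fixes w u :: "'a::{ordered_real_vector, conditionally_complete_lattice}"
  assumes "0 \<le> w" and le: "\<And>n::nat. real n *\<^sub>R w \<le> u"
  shows "w = 0"
proof -
  let ?s = "SUP n. real n *\<^sub>R w"
  have bd: "bdd_above (range (\<lambda>n::nat. real n *\<^sub>R w))" by (rule bdd_aboveI[of _ u]) (auto intro: le)
  have "real n *\<^sub>R w + w \<le> ?s" for n
    using cSUP_upper[OF UNIV_I bd, of "Suc n"] by (simp add: algebra_simps)
  then have "?s + w \<le> ?s"
    by (metis (no_types, lifting) cSUP_least UNIV_not_empty le_diff_eq)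
  with assms show ?thesis by simp
qed

section \<open>Ideals, bands and band projections\<close>

lemma riesz_ideal_zero: "riesz_ideal I \<Longrightarrow> 0 \<in> I"
  by (simp add: riesz_ideal_def)

lemma riesz_ideal_add: "riesz_ideal I \<Longrightarrow> x \<in> I \<Longrightarrow> y \<in> I \<Longrightarrow> x + y \<in> I"
  by (simp add: riesz_ideal_def)

lemma riesz_ideal_scaleR: "riesz_ideal I \<Longrightarrow> x \<in> I \<Longrightarrow> c *\<^sub>R x \<in> I"
  by (simp add: riesz_ideal_def)

lemma riesz_ideal_solid: "riesz_ideal I \<Longrightarrow> x \<in> I \<Longrightarrow> rabs y \<le> rabs x \<Longrightarrow> y \<in> I"
  unfolding riesz_ideal_def by blast

lemma riesz_ideal_diff: "riesz_ideal I \<Longrightarrow> x \<in> I \<Longrightarrow> y \<in> I \<Longrightarrow> x - y \<in> I"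
  using riesz_ideal_add[of I x "(-1) *\<^sub>R y"] riesz_ideal_scaleR[of I y "-1"] by simp

lemma riesz_ideal_rabs_iff: "riesz_ideal I \<Longrightarrow> rabs x \<in> I \<longleftrightarrow> x \<in> I"
  by (auto intro: riesz_ideal_solid)

lemma riesz_ideal_nonneg_le: "riesz_ideal I \<Longrightarrow> x \<in> I \<Longrightarrow> 0 \<le> y \<Longrightarrow> y \<le> x \<Longrightarrow> y \<in> I"
  by (erule riesz_ideal_solid) (auto intro: order_trans[OF _ riesz.abs_ge_self])

lemma band_riesz_ideal: "band B \<Longrightarrow> riesz_ideal B"
  by (simp add: band_def)

lemma band_cSup: "band B \<Longrightarrow> D \<subseteq> B \<Longrightarrow> D \<noteq> {} \<Longrightarrow> bdd_above D \<Longrightarrow> Sup D \<in> B"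
  by (simp add: band_def)

lemma rdisj_nonneg: "0 \<le> x \<Longrightarrow> 0 \<le> y \<Longrightarrow> rdisj x y \<longleftrightarrow> inf x y = 0"
  by (simp add: rdisj_def)

lemma dcompl_riesz_ideal: "riesz_ideal (dcompl (S::'a::{ordered_real_vector, lattice} set))"
  unfolding riesz_ideal_def
proof (intro conjI ballI allI impI)
  show "0 \<in> dcompl S"
    by (simp add: dcompl_def rdisj_def inf_absorb2)
next
  fix u v assume uv: "u \<in> dcompl S" "v \<in> dcompl S"
  show "u + v \<in> dcompl S"
    unfolding dcompl_def rdisj_def
  proof (intro CollectI ballI antisym)
    fix x assume "x \<in> S"
    then have "inf (rabs x) (rabs u) = 0" "inf (rabs x) (rabs v) = 0"
      using uv by (auto simp: dcompl_def rdisj_def)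
    moreover have "inf (rabs x) (rabs (u + v)) \<le> inf (rabs x) (rabs u) + inf (rabs x) (rabs v)"
      by (rule order_trans[OF inf_mono[OF order_refl riesz.abs_triangle_ineq]])
        (intro riesz.inf_add_le_add_inf riesz.abs_ge_zero)
    ultimately show "inf (rabs x) (rabs (u + v)) \<le> 0" by simp
  qed simp
next
  fix c :: real and u assume u: "u \<in> dcompl S"
  show "c *\<^sub>R u \<in> dcompl S"
    unfolding dcompl_def
  proof (intro CollectI ballI)
    fix x assume "x \<in> S"
    then have "inf (rabs u) (rabs x) = 0"
      using u by (auto simp: dcompl_def rdisj_def inf_commute)
    then have "inf (\<bar>c\<bar> *\<^sub>R rabs u) (rabs x) = 0"
      by (intro inf_scaleR_eq_0) auto
    then show "rdisj x (c *\<^sub>R u)" by (simp add: rdisj_def rabs_scaleR inf_commute)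
  qed
next
  fix u y assume u: "u \<in> dcompl S" and le: "rabs y \<le> rabs u"
  show "y \<in> dcompl S"
    unfolding dcompl_def
  proof (intro CollectI ballI)
    fix x assume "x \<in> S"
    then have "inf (rabs x) (rabs u) = 0" using u by (simp add: dcompl_def rdisj_def)
    moreover have "inf (rabs x) (rabs y) \<le> inf (rabs x) (rabs u)"
      using le by (intro inf_mono) auto
    ultimately have "inf (rabs x) (rabs y) \<le> 0" by simp
    then show "rdisj x y" unfolding rdisj_def by (rule antisym) simp
  qed
qed

lemma dcompl_cSup_nonneg:
  fixes D :: "'a::{ordered_real_vector, conditionally_complete_lattice} set"
  assumes D: "D \<subseteq> dcompl S" "D \<noteq> {}" "bdd_above D" and pos: "\<And>d. d \<in> D \<Longrightarrow> 0 \<le> d"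
  shows "Sup D \<in> dcompl S"
  unfolding dcompl_def
proof (intro CollectI ballI)
  fix x assume x: "x \<in> S"
  have "0 \<le> Sup D" using D pos by (meson all_not_in_conv cSup_upper2)
  then have "inf (rabs x) (rabs (Sup D)) = (SUP d\<in>D. inf (rabs x) d)"
    using inf_cSUP[of D id "rabs x"] D by simp
  also have "\<dots> = (SUP d\<in>D. 0)"
    using D pos x by (intro SUP_cong) (auto simp: dcompl_def rdisj_def)
  also have "\<dots> = 0" using D by simp
  finally show "rdisj x (Sup D)" by (simp add: rdisj_def)
qed

lemma dcompl_band: "band (dcompl (S::'a::{ordered_real_vector, conditionally_complete_lattice} set))"
  unfolding band_def
proof (intro conjI dcompl_riesz_ideal allI impI)
  fix D assume "D \<subseteq> dcompl S \<and> D \<noteq> {} \<and> bdd_above D"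
  then have sub: "D \<subseteq> dcompl S" and ne: "D \<noteq> {}" and bd: "bdd_above D" by auto
  let ?s = "Sup D"
  have I: "riesz_ideal (dcompl S)" by (rule dcompl_riesz_ideal)
  have "sup ?s 0 = Sup ((\<lambda>d. sup d 0) ` D)"
    using sup_cSUP[of D "\<lambda>d. d" 0] ne bd by simp
  also have "\<dots> \<in> dcompl S"
  proof (rule dcompl_cSup_nonneg)
    show "(\<lambda>d. sup d 0) ` D \<subseteq> dcompl S"
    proof
      fix y assume "y \<in> (\<lambda>d. sup d 0) ` D"
      then obtain d where d: "d \<in> D" and y: "y = sup d 0" by auto
      have "rabs y = y" unfolding y by (rule riesz.abs_of_nonneg[OF sup_ge2])
      also have "\<dots> \<le> rabs d" unfolding y by (intro sup_least riesz.abs_ge_self riesz.abs_ge_zero)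
      finally have "rabs y \<le> rabs d" .
      with d sub show "y \<in> dcompl S" by (blast intro: riesz_ideal_solid[OF I])
    qed
    show "bdd_above ((\<lambda>d. sup d 0) ` D)"
      by (rule bdd_aboveI[of _ "sup ?s 0"]) (auto intro: sup_mono cSup_upper[OF _ bd])
  qed (use ne in auto)
  finally have pos: "sup ?s 0 \<in> dcompl S" .
  obtain d0 where d0: "d0 \<in> D" using ne by auto
  have "- ?s \<le> rabs d0"
    using order_trans[OF le_imp_neg_le[OF cSup_upper[OF d0 bd]] riesz.abs_ge_minus_self] .
  then have "- ?s \<le> sup ?s 0 + rabs d0" by (rule add_increasing[OF sup_ge2])
  moreover have "?s \<le> sup ?s 0 + rabs d0" by (rule add_increasing2[OF riesz.abs_ge_zero sup_ge1])
  ultimately have "rabs ?s \<le> sup ?s 0 + rabs d0" by (intro riesz.abs_leI)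
  also have "\<dots> = rabs (sup ?s 0 + rabs d0)"
    by (rule riesz.abs_of_nonneg[symmetric, OF add_nonneg_nonneg[OF sup_ge2 riesz.abs_ge_zero]])
  finally have "rabs ?s \<le> rabs (sup ?s 0 + rabs d0)" .
  moreover have "rabs d0 \<in> dcompl S"
    using d0 sub riesz_ideal_rabs_iff[OF I, of d0] by blast
  then have "sup ?s 0 + rabs d0 \<in> dcompl S" by (rule riesz_ideal_add[OF I pos])
  ultimately show "?s \<in> dcompl S" by (rule riesz_ideal_solid[OF I, rotated])
qed

lemma band_gen_band: "band (band_gen (S::'a::{ordered_real_vector, conditionally_complete_lattice} set))"
  unfolding band_def riesz_ideal_def
proof (intro conjI ballI allI impI)
  show "0 \<in> band_gen S"
    by (auto simp: band_gen_def intro: riesz_ideal_zero band_riesz_ideal)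
  show "x + y \<in> band_gen S" if "x \<in> band_gen S" "y \<in> band_gen S" for x y
    using that by (auto simp: band_gen_def intro: riesz_ideal_add band_riesz_ideal)
  show "c *\<^sub>R x \<in> band_gen S" if "x \<in> band_gen S" for x and c :: real
    using that by (auto simp: band_gen_def intro: riesz_ideal_scaleR band_riesz_ideal)
  show "y \<in> band_gen S" if "x \<in> band_gen S" "rabs y \<le> rabs x" for x y
    using that by (auto simp: band_gen_def intro: riesz_ideal_solid band_riesz_ideal)
  show "Sup D \<in> band_gen S" if "D \<subseteq> band_gen S \<and> D \<noteq> {} \<and> bdd_above D" for D
    unfolding band_gen_def
  proof (rule InterI)
    fix B assume B: "B \<in> {B. band B \<and> S \<subseteq> B}"
    then have "D \<subseteq> B" using that unfolding band_gen_def by blast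
    with that B show "Sup D \<in> B" by (auto intro: band_cSup)
  qed
qed

lemma band_gen_subset: "S \<subseteq> band_gen S"
  by (auto simp: band_gen_def)

lemma band_gen_least: "band G \<Longrightarrow> S \<subseteq> G \<Longrightarrow> band_gen S \<subseteq> G"
  by (auto simp: band_gen_def)

lemma band_proj_exists:
  fixes y :: "'a::{ordered_real_vector, conditionally_complete_lattice}"
  assumes B: "band B" and y: "0 \<le> y"
  shows "\<exists>y1. y1 \<in> B \<and> y - y1 \<in> dcompl B \<and> 0 \<le> y1 \<and> y1 \<le> y"
proof -
  let ?D = "{b \<in> B. 0 \<le> b \<and> b \<le> y}"
  have I: "riesz_ideal B" using B by (rule band_riesz_ideal)
  have ne: "?D \<noteq> {}" using riesz_ideal_zero[OF I] y by auto
  have bd: "bdd_above ?D" by (rule bdd_aboveI[of _ y]) auto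
  define y1 where "y1 = Sup ?D"
  have y1: "y1 \<in> B" "0 \<le> y1" "y1 \<le> y"
    unfolding y1_def using B ne bd riesz_ideal_zero[OF I] y
    by (auto intro: band_cSup cSup_upper cSup_least)
  have "y - y1 \<in> dcompl B"
    unfolding dcompl_def
  proof (intro CollectI ballI)
    fix b assume b: "b \<in> B"
    define d where "d = inf (rabs b) (y - y1)"
    have d: "0 \<le> d" "d \<le> y - y1" using y1 by (simp_all add: d_def)
    have "rabs b \<in> B" using b I by (simp add: riesz_ideal_rabs_iff)
    then have "d \<in> B" by (rule riesz_ideal_nonneg_le[OF I _ d(1)]) (simp add: d_def)
    then have "y1 + d \<in> ?D" using y1 d by (auto intro: riesz_ideal_add[OF I] simp: le_diff_eq add.commute)
    then have "y1 + d \<le> y1" unfolding y1_def by (rule cSup_upper[OF _ bd])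
    then have "d = 0" using d by simp
    then show "rdisj b (y - y1)" using y1 by (simp add: rdisj_def d_def)
  qed
  with y1 show ?thesis by blast
qed

lemma band_proj_unique:
  fixes y :: "'a::{ordered_real_vector, conditionally_complete_lattice}"
  assumes B: "band B" and "y1 \<in> B" "y - y1 \<in> dcompl B" "y2 \<in> B" "y - y2 \<in> dcompl B"
  shows "y2 = y1"
proof -
  have "y2 - y1 \<in> B"
    using assms by (intro riesz_ideal_diff band_riesz_ideal)
  moreover have "y2 - y1 \<in> dcompl B"
    using riesz_ideal_diff[OF dcompl_riesz_ideal, of "y - y1" B "y - y2"] assms by simp
  ultimately have "rdisj (y2 - y1) (y2 - y1)" by (auto simp: dcompl_def)
  then show ?thesis by (simp add: rdisj_def)
qed

lemma band_proj_spec: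
  fixes y :: "'a::{ordered_real_vector, conditionally_complete_lattice}"
  assumes B: "band B" and y: "0 \<le> y"
  shows "band_proj B y \<in> B" "y - band_proj B y \<in> dcompl B"
    and "0 \<le> band_proj B y" "band_proj B y \<le> y"
proof -
  obtain y1 where y1: "y1 \<in> B" "y - y1 \<in> dcompl B" "0 \<le> y1" "y1 \<le> y"
    using band_proj_exists[OF B y] by blast
  have "band_proj B y = y1" unfolding band_proj_def
    by (rule the_equality) (use y1 band_proj_unique[OF B] in auto)
  with y1 show "band_proj B y \<in> B" "y - band_proj B y \<in> dcompl B"
    and "0 \<le> band_proj B y" "band_proj B y \<le> y" by simp_all
qed

lemma band_proj_greatest:
  fixes e :: "'a::{ordered_real_vector, conditionally_complete_lattice}"
  assumes G: "band G" and e: "0 \<le> e" and u: "u \<in> G" "0 \<le> u" "u \<le> e"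
  shows "u \<le> band_proj G e"
proof (rule riesz.le_of_le_add_disjoint)
  note p = band_proj_spec[OF G e]
  have "rdisj u (e - band_proj G e)" using p(2) u(1) by (auto simp: dcompl_def)
  then show "inf u (e - band_proj G e) = 0" using u p by (simp add: rdisj_nonneg)
qed (use u band_proj_spec[OF G e] in auto)

lemma band_proj_mono_band:
  fixes e :: "'a::{ordered_real_vector, conditionally_complete_lattice}"
  assumes "band B" "band G" "B \<subseteq> G" "0 \<le> e"
  shows "band_proj B e \<le> band_proj G e"
  by (rule band_proj_greatest[OF assms(2,4)]) (use band_proj_spec[OF assms(1,4)] assms(3) in auto)

section \<open>The sup-completion\<close>

lemma meet_sup_singleton [simp]: "meet_sup x {y} = inf x y"
  by (simp add: meet_sup_def)

lemma bdd_above_inf_image: "bdd_above ((inf (x::'a::lattice)) ` A)"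
  by (rule bdd_aboveI[of _ x]) auto

lemma meet_sup_upper: "a \<in> A \<Longrightarrow> inf x a \<le> meet_sup x A"
  unfolding meet_sup_def by (intro cSUP_upper bdd_above_inf_image)

lemma meet_sup_least: "A \<noteq> {} \<Longrightarrow> (\<And>a. a \<in> A \<Longrightarrow> inf x a \<le> M) \<Longrightarrow> meet_sup x A \<le> M"
  unfolding meet_sup_def by (intro cSUP_least) auto

lemma meet_sup_le: "A \<noteq> {} \<Longrightarrow> meet_sup x A \<le> x"
  by (rule meet_sup_least) auto

lemma sc_posD: "sc_pos C \<Longrightarrow> inf x 0 \<le> meet_sup x C"
  unfolding sc_pos_def sc_le_def by simp

lemma sc_le_meet_sup:
  fixes w :: "'a::{ordered_real_vector, conditionally_complete_lattice}"
  assumes "A \<noteq> {}" and "w \<le> meet_sup t A"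
  shows "sc_le {w} A"
  unfolding sc_le_def meet_sup_singleton
proof
  fix x
  have "inf x w \<le> inf x (meet_sup t A)"
    using assms by (intro inf_mono) auto
  also have "\<dots> = (SUP a\<in>A. inf x (inf t a))"
    unfolding meet_sup_def using assms(1) by (intro inf_cSUP bdd_above_inf_image)
  also have "\<dots> \<le> meet_sup x A"
    unfolding meet_sup_def
  proof (rule cSUP_mono[OF assms(1) bdd_above_inf_image])
    fix a assume "a \<in> A"
    show "\<exists>a'\<in>A. inf x (inf t a) \<le> inf x a'"
      by (rule bexI[OF _ \<open>a \<in> A\<close>]) (intro inf_mono order_refl inf_le2)
  qed
  finally show "inf x w \<le> meet_sup x A" .
qed

lemma sc_le_of_mem_band:
  fixes v :: "'a::{ordered_real_vector, conditionally_complete_lattice}"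
  assumes AC: "sc_eq A (sc_add B C)" and C: "C \<noteq> {}" "sc_pos C" and v: "v \<in> B"
  shows "sc_le {v} A"
  unfolding sc_le_def meet_sup_singleton
proof
  fix x
  let ?M = "meet_sup x A"
  have M: "?M = meet_sup x (sc_add B C)" using AC by (simp add: sc_eq_def)
  have "inf (x - v) c \<le> ?M - v" if c: "c \<in> C" for c
  proof -
    have "inf (x - v) c + v = inf x (v + c)"
      by (simp add: riesz.add_inf_distrib_left riesz.add_inf_distrib_right add.commute)
    also have "\<dots> \<le> ?M"
      unfolding M using v c by (intro meet_sup_upper) (auto simp: sc_add_def)
    finally show ?thesis by (simp add: le_diff_eq)
  qed
  then have "meet_sup (x - v) C \<le> ?M - v" by (intro meet_sup_least C)
  moreover have "inf (x - v) 0 \<le> meet_sup (x - v) C" by (rule sc_posD[OF C(2)])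
  moreover have "inf (x - v) 0 = inf x v - v"
    using riesz.add_inf_distrib_right[of x v "- v"] by simp
  ultimately have "inf x v - v \<le> ?M - v" by (metis order_trans)
  then show "inf x v \<le> ?M" by simp
qed

lemma sc_le_finite_part_of_disjoint:
  fixes w :: "'a::{ordered_real_vector, conditionally_complete_lattice}"
  assumes AC: "sc_eq A (sc_add B C)" and B: "band B" and C: "C \<noteq> {}" "sc_pos C"
    and w: "0 \<le> w" "w \<in> dcompl B" and wA: "sc_le {w} A"
  shows "sc_le {w} C"
  unfolding sc_le_def meet_sup_singleton
proof
  fix x
  let ?x' = "inf x w"
  have "inf x w = inf ?x' w" by (simp add: inf_absorb1)
  also have "\<dots> \<le> meet_sup ?x' A" using wA unfolding sc_le_def meet_sup_singleton by blast
  also have "\<dots> = meet_sup ?x' (sc_add B C)" using AC by (simp add: sc_eq_def)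
  also have "\<dots> \<le> meet_sup x C"
  proof (rule meet_sup_least)
    obtain c0 where "c0 \<in> C" using C by auto
    then have "0 + c0 \<in> sc_add B C"
      using riesz_ideal_zero[OF band_riesz_ideal[OF B]] unfolding sc_add_def by blast
    then show "sc_add B C \<noteq> {}" by auto
  next
    fix t assume "t \<in> sc_add B C"
    then obtain b c where b: "b \<in> B" and c: "c \<in> C" and t: "t = b + c"
      unfolding sc_add_def by blast
    have "inf (rabs b) w = 0" using w b by (auto simp: dcompl_def rdisj_def)
    have "inf w (b + c) \<le> inf w (rabs b + sup c 0)"
      by (intro inf_mono order_refl add_mono riesz.abs_ge_self sup_ge1)
    also have "\<dots> \<le> inf w (rabs b) + inf w (sup c 0)"
      using w(1) by (intro riesz.inf_add_le_add_inf) auto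
    also have "\<dots> = inf w (sup c 0)"
      using \<open>inf (rabs b) w = 0\<close> by (simp add: inf_commute)
    finally have "inf w (b + c) \<le> sup c 0" by (simp add: le_infI2)
    moreover have "inf ?x' t \<le> inf w (b + c)"
      unfolding t by (intro inf_mono inf_le2 order_refl)
    ultimately have "inf ?x' t \<le> inf x (sup c 0)"
      by (meson inf_le1 le_infI order_trans)
    also have "\<dots> = sup (inf x c) (inf x 0)" by (rule inf_sup_distrib_riesz)
    also have "\<dots> \<le> meet_sup x C"
      by (intro sup_least meet_sup_upper c sc_posD C)
    finally show "inf ?x' t \<le> meet_sup x C" .
  qed
  finally show "inf x w \<le> meet_sup x C" .
qed

lemma sc_le_pos_part:
  fixes v t :: "'a::{ordered_real_vector, conditionally_complete_lattice}"
  assumes A: "A \<noteq> {}" and vA: "sc_le {v} A"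
  shows "sc_le {sup (v - t) 0} ((\<lambda>a. sup (a - t) 0) ` A)"
  unfolding sc_le_def meet_sup_singleton
proof
  fix x
  let ?f = "\<lambda>a. sup (inf v a - t) 0"
  have bd: "bdd_above ((\<lambda>a. inf v a - t) ` A)"
    by (rule bdd_aboveI[of _ "v - t"]) (auto intro: diff_right_mono)
  have bdf: "bdd_above (?f ` A)"
    by (rule bdd_aboveI[of _ "sup (v - t) 0"]) (auto intro: sup_mono diff_right_mono)
  have "v \<le> (SUP a\<in>A. inf v a)"
    using vA[unfolded sc_le_def, rule_format, of v] by (simp add: meet_sup_def)
  then have v: "(SUP a\<in>A. inf v a) = v"
    using A by (intro antisym cSUP_least) auto
  have "sup (v - t) 0 = sup ((SUP a\<in>A. inf v a) - t) 0" by (simp only: v)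
  also have "\<dots> = sup (SUP a\<in>A. inf v a - t) 0"
    by (simp only: cSUP_diff_const[OF A bdd_above_inf_image])
  also have "\<dots> = (SUP a\<in>A. ?f a)" by (rule sup_cSUP[OF A bd])
  finally have "inf x (sup (v - t) 0) = (SUP a\<in>A. inf x (?f a))"
    using inf_cSUP[OF A bdf] by simp
  also have "\<dots> \<le> meet_sup x ((\<lambda>a. sup (a - t) 0) ` A)"
    unfolding meet_sup_def
  proof (rule cSUP_mono[OF A bdd_above_inf_image])
    fix a assume a: "a \<in> A"
    show "\<exists>a'\<in>(\<lambda>a. sup (a - t) 0) ` A. inf x (?f a) \<le> inf x a'"
      by (rule bexI[OF _ imageI[OF a]]) (intro inf_mono sup_mono diff_right_mono order_refl inf_le2)
  qed
  finally show "inf x (sup (v - t) 0) \<le> meet_sup x ((\<lambda>a. sup (a - t) 0) ` A)" .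
qed

lemma pos_part_diff_mem_band_gen_pluspart:
  fixes e :: "'a::{ordered_real_vector, conditionally_complete_lattice}"
  assumes AC: "sc_eq A (sc_add B C)" and C: "C \<noteq> {}" "sc_pos C" and A: "A \<noteq> {}"
    and v: "v \<in> B"
  shows "sup (v - real k *\<^sub>R e) 0 \<in> band_gen (sc_below (sc_pluspart A k e))"
proof -
  have "sc_le {sup (v - real k *\<^sub>R e) 0} (sc_pluspart A k e)"
    unfolding sc_pluspart_def by (intro sc_le_pos_part A sc_le_of_mem_band[OF AC C v])
  then have "sup (v - real k *\<^sub>R e) 0 \<in> sc_below (sc_pluspart A k e)"
    by (simp add: sc_below_def)
  with band_gen_subset show ?thesis by blast
qed

lemma band_subset_band_gen_pluspart:
  fixes e :: "'a::{ordered_real_vector, conditionally_complete_lattice}"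
  assumes e: "0 \<le> e" and B: "band B" and AC: "sc_eq A (sc_add B C)"
    and C: "C \<noteq> {}" "sc_pos C" and A: "A \<noteq> {}"
  shows "B \<subseteq> band_gen (sc_below (sc_pluspart A k e))"
proof
  let ?G = "band_gen (sc_below (sc_pluspart A k e))"
  have G: "riesz_ideal ?G" by (rule band_riesz_ideal[OF band_gen_band])
  fix b assume b: "b \<in> B"
  \<comment> \<open>t m is ((m + 1) |b| - k e)^+ / (m + 1); these increase to |b|.\<close>
  define t where "t m = sup (rabs b - (real k / real (Suc m)) *\<^sub>R e) 0" for m
  have t: "t m \<in> ?G" for m
  proof -
    let ?n = "real (Suc m)"
    let ?y = "sup (?n *\<^sub>R rabs b - real k *\<^sub>R e) 0"
    have "?n *\<^sub>R rabs b \<in> B"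
      using b band_riesz_ideal[OF B] by (simp add: riesz_ideal_scaleR riesz_ideal_rabs_iff)
    then have "?y \<in> ?G" by (rule pos_part_diff_mem_band_gen_pluspart[OF AC C A])
    then have "inverse ?n *\<^sub>R ?y \<in> ?G" by (rule riesz_ideal_scaleR[OF G])
    moreover have "inverse ?n *\<^sub>R ?y = t m"
      unfolding t_def scaleR_sup_nonneg[OF inverse_nonnegative_iff_nonnegative[THEN iffD2, OF of_nat_0_le_iff]]
      by (simp add: scaleR_diff_right divide_inverse_commute)
    ultimately show ?thesis by simp
  qed
  have t_le: "t m \<le> rabs b" for m
    using e by (simp add: t_def scaleR_nonneg_nonneg)
  have bd: "bdd_above (range t)" by (rule bdd_aboveI[of _ "rabs b"]) (auto intro: t_le)
  let ?s = "SUP m. t m"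
  have "rabs b - ?s = 0"
  proof (rule multiples_bounded_imp_eq_0)
    show "0 \<le> rabs b - ?s" by (simp add: cSUP_least t_le)
    fix n :: nat
    show "real n *\<^sub>R (rabs b - ?s) \<le> real k *\<^sub>R e"
    proof (cases n)
      case 0
      then show ?thesis using e by (simp add: scaleR_nonneg_nonneg)
    next
      case (Suc m)
      have "rabs b - ?s \<le> rabs b - t m"
        using cSUP_upper[OF UNIV_I bd] by (rule diff_left_mono)
      also have "\<dots> = inf ((real k / real n) *\<^sub>R e) (rabs b)"
        unfolding t_def Suc by (simp add: riesz.diff_sup_eq_inf riesz.add_inf_distrib_left)
      also have "\<dots> \<le> (real k / real n) *\<^sub>R e" by (rule inf_le1)
      finally have "real n *\<^sub>R (rabs b - ?s) \<le> real n *\<^sub>R ((real k / real n) *\<^sub>R e)"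
        by (rule scaleR_left_mono) simp
      also have "\<dots> = real k *\<^sub>R e" using Suc by simp
      finally show ?thesis .
    qed
  qed
  moreover have "?s \<in> ?G"
    by (rule band_cSup[OF band_gen_band]) (use t bd in auto)
  ultimately have "rabs b \<in> ?G" by simp
  then show "b \<in> ?G" using G by (simp add: riesz_ideal_rabs_iff)
qed

lemma sc_below_pos_part_disjoint:
  fixes t :: "'a::{ordered_real_vector, conditionally_complete_lattice}"
  assumes A: "A \<noteq> {}"
  shows "sc_below ((\<lambda>a. sup (a - t) 0) ` A) \<subseteq> dcompl {t - meet_sup t A}"
proof
  let ?r = "t - meet_sup t A"
  have r: "0 \<le> ?r" using meet_sup_le[OF A] by simp
  fix y assume "y \<in> sc_below ((\<lambda>a. sup (a - t) 0) ` A)"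
  then have y: "0 \<le> y" and yA: "\<And>x. inf x y \<le> meet_sup x ((\<lambda>a. sup (a - t) 0) ` A)"
    by (simp_all add: sc_below_def sc_le_def)
  have "inf ?r y = inf (inf ?r y) y" by (simp add: inf_assoc)
  also have "\<dots> \<le> meet_sup (inf ?r y) ((\<lambda>a. sup (a - t) 0) ` A)" by (rule yA)
  also have "\<dots> \<le> 0"
  proof (rule meet_sup_least)
    show "(\<lambda>a. sup (a - t) 0) ` A \<noteq> {}" using A by simp
    fix a' assume "a' \<in> (\<lambda>a. sup (a - t) 0) ` A"
    then obtain a where a: "a \<in> A" and a': "a' = sup (a - t) 0" by auto
    have "?r \<le> t - inf t a" using meet_sup_upper[OF a] by (rule diff_left_mono)
    also have "\<dots> = sup (- (a - t)) 0"
      by (simp add: riesz.diff_inf_eq_sup riesz.add_sup_distrib_left sup_commute)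
    finally have "inf (inf ?r y) a' \<le> inf (sup (- (a - t)) 0) (sup (a - t) 0)"
      unfolding a' by (intro inf_mono le_infI1) auto
    also have "\<dots> = 0" by (subst inf_commute) (rule riesz.inf_pos_part_neg_part)
    finally show "inf (inf ?r y) a' \<le> 0" .
  qed
  finally have "inf ?r y = 0" using r y by (intro antisym) auto
  then show "y \<in> dcompl {?r}" using r y by (simp add: dcompl_def rdisj_nonneg)
qed

lemma scaleR_band_proj_pluspart_le:
  fixes e :: "'a::{ordered_real_vector, conditionally_complete_lattice}"
  assumes e: "0 \<le> e" and A: "A \<noteq> {}" "sc_pos A"
  shows "real k *\<^sub>R band_proj (band_gen (sc_below (sc_pluspart A k e))) e
    \<le> meet_sup (real k *\<^sub>R e) A"
proof -
  let ?G = "band_gen (sc_below (sc_pluspart A k e))"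
  let ?p = "band_proj ?G e" and ?m = "meet_sup (real k *\<^sub>R e) A"
  let ?r = "real k *\<^sub>R e - ?m"
  note p = band_proj_spec[OF band_gen_band e, of "sc_below (sc_pluspart A k e)"]
  have "inf (real k *\<^sub>R e) 0 = 0" using e by (simp add: inf_absorb2 scaleR_nonneg_nonneg)
  then have m: "0 \<le> ?m" using sc_posD[OF A(2), of "real k *\<^sub>R e"] by simp
  have r: "0 \<le> ?r" using meet_sup_le[OF A(1)] by simp
  have "?G \<subseteq> dcompl {?r}"
    unfolding sc_pluspart_def by (intro band_gen_least dcompl_band sc_below_pos_part_disjoint A)
  with p(1) have "rdisj ?r ?p" by (auto simp: dcompl_def)
  then have "inf ?p ?r = 0" using p(3) r by (simp add: rdisj_nonneg inf_commute)
  then have disj: "inf (real k *\<^sub>R ?p) ?r = 0"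
    by (rule inf_scaleR_eq_0[OF p(3) r]) simp
  have "real k *\<^sub>R ?p \<le> ?m + ?r"
    using p(4) by (simp add: scaleR_left_mono)
  from riesz.le_of_le_add_disjoint[OF _ m r this disj] show ?thesis
    using p(3) by (simp add: scaleR_nonneg_nonneg)
qed

lemma sc_le_multiples_of_le_band_proj_pluspart:
  fixes e w :: "'a::{ordered_real_vector, conditionally_complete_lattice}"
  assumes e: "0 \<le> e" and A: "A \<noteq> {}" "sc_pos A"
    and w: "\<And>k. 1 \<le> k \<Longrightarrow> w \<le> band_proj (band_gen (sc_below (sc_pluspart A k e))) e"
  shows "sc_le {real n *\<^sub>R w} A"
proof (cases "n = 0")
  case True
  then show ?thesis using A(2) by (simp add: sc_pos_def)
next
  case False
  have "real n *\<^sub>R w \<le> real n *\<^sub>R band_proj (band_gen (sc_below (sc_pluspart A n e))) e"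
    using w[of n] False by (intro scaleR_left_mono) auto
  also have "\<dots> \<le> meet_sup (real n *\<^sub>R e) A"
    by (rule scaleR_band_proj_pluspart_le[OF e A])
  finally show ?thesis by (rule sc_le_meet_sup[OF A(1)])
qed

lemma disjoint_sc_le_multiples_eq_0:
  fixes w :: "'a::{ordered_real_vector, conditionally_complete_lattice}"
  assumes AC: "sc_eq A (sc_add B C)" and B: "band B"
    and C: "C \<noteq> {}" "sc_pos C" "sc_finite C"
    and w: "0 \<le> w" "w \<in> dcompl B" and wA: "\<And>n. sc_le {real n *\<^sub>R w} A"
  shows "w = 0"
proof (rule ccontr)
  assume "w \<noteq> 0"
  with w(1) have "0 < w" by simp
  moreover have "sc_le {real n *\<^sub>R w} C" for n
    using w by (intro sc_le_finite_part_of_disjoint[OF AC B C(1,2)] wA scaleR_nonneg_nonneg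
        riesz_ideal_scaleR[OF dcompl_riesz_ideal]) auto
  ultimately show False using C(3) unfolding sc_finite_def by blast
qed

theorem theoremT5:
  fixes e :: "'a::{ordered_real_vector, conditionally_complete_lattice}"
    and A B :: "'a set"
  assumes "weak_unit e"
    and "up_directed A" and "sc_pos A"
    and "inf_part_band A B"
  shows "(INF k\<in>{1::nat..}. band_proj (band_gen (sc_below (sc_pluspart A k e))) e)
           = band_proj B e"
proof -
  have e: "0 \<le> e" using assms(1) by (simp add: weak_unit_def)
  have A: "A \<noteq> {}" using assms(2) by (simp add: up_directed_def)
  obtain C where B: "band B" and C: "up_directed C" "sc_pos C" "sc_finite C"
    and AC: "sc_eq A (sc_add B C)"
    using assms(4) unfolding inf_part_band_def by blast
  have C_ne: "C \<noteq> {}" using C(1) by (simp add: up_directed_def)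
  define p where "p k = band_proj (band_gen (sc_below (sc_pluspart A k e))) e" for k
  define z where "z = (INF k\<in>{1::nat..}. p k)"
  have p: "band_proj B e \<le> p k" "p k \<le> e" for k
    unfolding p_def using band_proj_spec(4)[OF band_gen_band e]
      band_proj_mono_band[OF B band_gen_band band_subset_band_gen_pluspart[OF e B AC C_ne C(2) A] e]
    by auto
  have z_lower: "band_proj B e \<le> z"
    unfolding z_def using p by (auto intro: cINF_greatest)
  have z_upper: "z \<le> p k" if "1 \<le> k" for k
    unfolding z_def by (rule cINF_lower[OF bdd_belowI[of _ "band_proj B e"]]) (use p that in auto)
  have "0 \<le> z" using z_lower band_proj_spec[OF B e] by (auto intro: order_trans)
  note q = band_proj_spec[OF B this]
  have "z - band_proj B z \<le> p k" if "1 \<le> k" for k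
    using q(3) z_upper[OF that] by (simp add: diff_le_eq add_increasing2)
  then have "z - band_proj B z = 0"
    using q unfolding p_def
    by (intro disjoint_sc_le_multiples_eq_0[OF AC B C_ne C(2,3)]
        sc_le_multiples_of_le_band_proj_pluspart[OF e A assms(3)]) auto
  then have "z \<le> band_proj B e"
    using q z_upper[of 1] p(2)[of 1] by (intro band_proj_greatest[OF B e]) auto
  with z_lower show ?thesis unfolding z_def p_def by simp
qed

end
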